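(* Let $\pi:L_{\mathcal F}\to L_{\mathcal G}$ satisfy (REG). For any fixed, at most countable, family $\{\Gamma(h)\}_{h\ge1}$ of finite partitions of $\Omega$ into $\mathcal G$-measurable sets, any $X\in L_{\mathcal F}$ and any $Q\in L^*_{\mathcal F}\cap\mathcal P$, there exists a sequence $(\xi^Q_m)_{m\ge1}\subseteq L_{\mathcal F}$ such that $E_Q[\xi^Q_m\mid\mathcal G]\ge_Q E_Q[X\mid\mathcal G]$ for all $m\ge1$, $\pi(\xi^Q_m)\downarrow K(X,Q)$ as $m\uparrow\infty$, and for all $h$, $\pi^{\Gamma(h)}(\xi^Q_m)\downarrow K^{\Gamma(h)}(X,Q)$ as $m\uparrow\infty$.
   Context: Let $(\Omega,\mathcal F,\mathbb P)$ be a probability space and $\mathcal G\subseteq\mathcal F$ a sub-$\sigma$-algebra. (In)equalities hold $\mathbb P$-a.s. unless a measure is indicated ($\ge_Q$: $Q$-a.s.); $\inf$ is the $\mathbb P$-essential infimum. $L_{\mathcal F}\subseteq L^0(\Omega,\mathcal F,\mathbb P)$, $L_{\mathcal G}\subseteq L^0(\Omega,\mathcal G,\mathbb P)$ are vector lattices closed under multiplication by indicators of $\mathcal F$- (resp. $\mathcal G$-) measurable sets; the order continuous dual $L^*_{\mathcal F}$ of $(L_{\mathcal F},\ge)$ is a lattice contained in $L^1(\Omega,\mathcal F,\mathbb P)$ (functionals $X\mapsto E_{\mathbb P}[ZX]$), closed under multiplication by indicators of sets in $\mathcal F$. $\mathcal P$ = densities of probabilities $Q\ll\mathbb P$. (REG):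 $\pi(X\mathbf 1_A+Y\mathbf 1_{A^c})=\pi(X)\mathbf 1_A+\pi(Y)\mathbf 1_{A^c}$ for $A\in\mathcal G$. $K(X,Q):=\inf_{\xi\in L_{\mathcal F}}\{\pi(\xi)\mid E_Q[\xi\mid\mathcal G]\ge_Q E_Q[X\mid\mathcal G]\}$. For $A\in\mathcal G$, $\pi_A(X):=\operatorname{ess\,sup}_{\omega\in A}\pi(X)(\omega)$; for a finite $\mathcal G$-measurable partition $\Gamma$, $\pi^\Gamma(X):=\sum_{A\in\Gamma}\pi_A(X)\mathbf 1_A$ and $K^\Gamma(X,Q):=\inf_{\xi\in L_{\mathcal F}}\{\pi^\Gamma(\xi)\mid E_Q[\xi\mid\mathcal G]\ge_Q E_Q[X\mid\mathcal G]\}$. *)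

theory Defs
  imports "HOL-Probability.Probability"
begin

text \<open>A vector lattice of (representatives of) random variables that are N-measurable,
  closed under multiplication by indicators of N-measurable sets, and closed under
  P-a.s. equality (so that it is really a set of equivalence classes of L0).\<close>
definition rv_lattice :: "'a measure \<Rightarrow> 'a measure \<Rightarrow> ('a \<Rightarrow> real) set \<Rightarrow> bool" where
  "rv_lattice P N L \<longleftrightarrow>
     L \<subseteq> borel_measurable N \<and>
     (\<lambda>x. 0) \<in> L \<and>
     (\<forall>X\<in>L. \<forall>Y\<in>L. (\<lambda>x. X x + Y x) \<in> L) \<and>
     (\<forall>X\<in>L. \<forall>c::real. (\<lambda>x. c * X x) \<in> L) \<and>
     (\<forall>X\<in>L. \<forall>Y\<in>L. (\<lambda>x. max (X x) (Y x)) \<in> L) \<and>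
     (\<forall>X\<in>L. \<forall>A\<in>sets N. (\<lambda>x. indicator A x * X x) \<in> L) \<and>
     (\<forall>X\<in>L. \<forall>Y\<in>borel_measurable N. (AE x in P. X x = Y x) \<longrightarrow> Y \<in> L)"

text \<open>Densities of probability measures Q absolutely continuous w.r.t. P.\<close>
definition prob_densities :: "'a measure \<Rightarrow> ('a \<Rightarrow> real) set" where
  "prob_densities P = {Z. Z \<in> borel_measurable P \<and> (AE x in P. 0 \<le> Z x) \<and> integral\<^sup>L P Z = 1}"

definition dens_meas :: "'a measure \<Rightarrow> ('a \<Rightarrow> real) \<Rightarrow> 'a measure" where
  "dens_meas P Z = density P (\<lambda>x. ennreal (Z x))"

definition is_ess_inf :: "'a measure \<Rightarrow> 'a measure \<Rightarrow> ('a \<Rightarrow> ereal) set \<Rightarrow> ('a \<Rightarrow> ereal) \<Rightarrow> bool" where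
  "is_ess_inf P N S Y \<longleftrightarrow>
     Y \<in> borel_measurable N \<and>
     (\<forall>f\<in>S. AE x in P. Y x \<le> f x) \<and>
     (\<forall>Y'\<in>borel_measurable N. (\<forall>f\<in>S. AE x in P. Y' x \<le> f x) \<longrightarrow> (AE x in P. Y' x \<le> Y x))"

definition ess_inf_fam :: "'a measure \<Rightarrow> 'a measure \<Rightarrow> ('a \<Rightarrow> ereal) set \<Rightarrow> ('a \<Rightarrow> ereal)" where
  "ess_inf_fam P N S = (SOME Y. is_ess_inf P N S Y)"

definition admissible :: "'a measure \<Rightarrow> 'a measure \<Rightarrow> ('a \<Rightarrow> real) set \<Rightarrow> ('a \<Rightarrow> real)
    \<Rightarrow> ('a \<Rightarrow> real) \<Rightarrow> ('a \<Rightarrow> real) \<Rightarrow> bool" where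
  "admissible P G LF X Z \<xi> \<longleftrightarrow> \<xi> \<in> LF \<and>
     (AE x in dens_meas P Z. real_cond_exp (dens_meas P Z) G \<xi> x \<ge> real_cond_exp (dens_meas P Z) G X x)"

definition Kfun :: "'a measure \<Rightarrow> 'a measure \<Rightarrow> ('a \<Rightarrow> real) set \<Rightarrow> (('a \<Rightarrow> real) \<Rightarrow> ('a \<Rightarrow> real))
    \<Rightarrow> ('a \<Rightarrow> real) \<Rightarrow> ('a \<Rightarrow> real) \<Rightarrow> ('a \<Rightarrow> ereal)" where
  "Kfun P G LF \<pi> X Z = ess_inf_fam P G {(\<lambda>x. ereal (\<pi> \<xi> x)) | \<xi>. admissible P G LF X Z \<xi>}"

definition pi_on :: "'a measure \<Rightarrow> (('a \<Rightarrow> real) \<Rightarrow> ('a \<Rightarrow> real)) \<Rightarrow> 'a set \<Rightarrow> ('a \<Rightarrow> real) \<Rightarrow> ereal" where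
  "pi_on P \<pi> A X = Inf {z::ereal. AE x in P. x \<in> A \<longrightarrow> ereal (\<pi> X x) \<le> z}"

definition pi_part :: "'a measure \<Rightarrow> (('a \<Rightarrow> real) \<Rightarrow> ('a \<Rightarrow> real)) \<Rightarrow> 'a set set \<Rightarrow> ('a \<Rightarrow> real) \<Rightarrow> ('a \<Rightarrow> ereal)" where
  "pi_part P \<pi> \<Gamma> X = (\<lambda>x. \<Sum>A\<in>\<Gamma>. if x \<in> A then pi_on P \<pi> A X else 0)"

definition Kpart :: "'a measure \<Rightarrow> 'a measure \<Rightarrow> ('a \<Rightarrow> real) set \<Rightarrow> (('a \<Rightarrow> real) \<Rightarrow> ('a \<Rightarrow> real))
    \<Rightarrow> 'a set set \<Rightarrow> ('a \<Rightarrow> real) \<Rightarrow> ('a \<Rightarrow> real) \<Rightarrow> ('a \<Rightarrow> ereal)" where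
  "Kpart P G LF \<pi> \<Gamma> X Z = ess_inf_fam P G {pi_part P \<pi> \<Gamma> \<xi> | \<xi>. admissible P G LF X Z \<xi>}"

definition finite_G_partition :: "'a measure \<Rightarrow> 'a set set \<Rightarrow> bool" where
  "finite_G_partition G \<Gamma> \<longleftrightarrow> finite \<Gamma> \<and> \<Gamma> \<subseteq> sets G \<and> \<Union>\<Gamma> = space G \<and>
     (\<forall>A\<in>\<Gamma>. \<forall>B\<in>\<Gamma>. A \<noteq> B \<longrightarrow> A \<inter> B = {})"

end

theory Submission
  imports Defs
begin

text \<open>Pasting two admissible positions along the \<open>G\<close>-measurable set where the first is
  cheaper keeps the conditional constraint (\<open>G\<close>-indicators factor out of \<open>E_Q[\<cdot> | G]\<close>) and,
  by (REG), prices the pasted position at the pointwise minimum; so the admissible family is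
  downward directed under \<open>\<pi>\<close>. For a downward directed family the essential infimum of
  \<open>\<pi>\<close> is a countable infimum (compare the bounded integrals of \<open>arctan \<circ> \<pi>\<close>), and each
  infimum of \<open>\<pi>_A\<close> over the family is a countable infimum of extended reals. As there are only
  countably many blocks \<open>A\<close> in all the partitions \<open>\<Gamma>(h)\<close>, all these minimizing sequences
  together form a countable admissible family, and pasting its members successively yields one
  sequence along which \<open>\<pi>\<close> decreases to \<open>K\<close> and, since \<open>\<pi>^\<Gamma>\<close> equals \<open>\<pi>_A\<close> on each
  block \<open>A\<close>, every \<open>\<pi>^\<Gamma>(h)\<close> decreases to \<open>K^\<Gamma>(h)\<close>.\<close>

lemma is_ess_inf_unique:
  assumes "is_ess_inf P N S Y1" and "is_ess_inf P N S Y2"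
  shows "AE x in P. Y1 x = Y2 x"
proof -
  have "AE x in P. Y1 x \<le> Y2 x" and "AE x in P. Y2 x \<le> Y1 x"
    using assms unfolding is_ess_inf_def by blast+
  then show ?thesis by eventually_elim simp
qed

lemma ess_inf_fam_eq_INF:
  fixes f :: "nat \<Rightarrow> 'a \<Rightarrow> ereal"
  assumes S: "\<And>m. f m \<in> S" and meas: "\<And>m. f m \<in> borel_measurable N"
    and lower: "\<And>g. g \<in> S \<Longrightarrow> AE x in P. (INF m. f m x) \<le> g x"
  shows "AE x in P. (INF m. f m x) = ess_inf_fam P N S x"
proof -
  have "is_ess_inf P N S (\<lambda>x. INF m. f m x)"
    unfolding is_ess_inf_def
  proof (intro conjI ballI impI)
    show "(\<lambda>x. INF m. f m x) \<in> borel_measurable N" using meas by measurable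
  next
    fix Y assume "\<forall>g\<in>S. AE x in P. Y x \<le> g x"
    then have "AE x in P. \<forall>m. Y x \<le> f m x" using S by (simp add: AE_all_countable)
    then show "AE x in P. Y x \<le> (INF m. f m x)" by eventually_elim (auto intro: INF_greatest)
  qed (use lower in blast)
  moreover from this have "is_ess_inf P N S (ess_inf_fam P N S)"
    unfolding ess_inf_fam_def by (rule someI[where P = "is_ess_inf P N S"])
  ultimately show ?thesis by (rule is_ess_inf_unique)
qed

lemma pi_on_mono:
  assumes "AE x in P. \<pi> Y x \<le> \<pi> Y' x"
  shows "pi_on P \<pi> A Y \<le> pi_on P \<pi> A Y'"
proof -
  have "AE x in P. x \<in> A \<longrightarrow> ereal (\<pi> Y x) \<le> z"
    if "AE x in P. x \<in> A \<longrightarrow> ereal (\<pi> Y' x) \<le> z" for z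
    using that assms by eventually_elim (auto intro: order_trans[rotated])
  then show ?thesis
    unfolding pi_on_def by (intro Inf_superset_mono) blast
qed

lemma pi_part_eq_pi_on:
  assumes "finite_G_partition G \<Gamma>" and "A \<in> \<Gamma>" and "x \<in> A"
  shows "pi_part P \<pi> \<Gamma> Y x = pi_on P \<pi> A Y"
proof -
  have "finite \<Gamma>" and disj: "\<And>B. B \<in> \<Gamma> - {A} \<Longrightarrow> x \<notin> B"
    using assms unfolding finite_G_partition_def by blast+
  then have "pi_part P \<pi> \<Gamma> Y x = (if x \<in> A then pi_on P \<pi> A Y else 0)"
    unfolding pi_part_def using \<open>A \<in> \<Gamma>\<close> by (subst sum.remove) (auto intro: sum.neutral)
  with \<open>x \<in> A\<close> show ?thesis by simp
qed

lemma borel_measurable_pi_part: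
  assumes "finite_G_partition G \<Gamma>"
  shows "pi_part P \<pi> \<Gamma> Y \<in> borel_measurable G"
  unfolding pi_part_def
proof (rule borel_measurable_ereal_sum)
  fix A assume "A \<in> \<Gamma>"
  then have [measurable]: "A \<in> sets G" using assms by (auto simp: finite_G_partition_def)
  show "(\<lambda>x. if x \<in> A then pi_on P \<pi> A Y else 0) \<in> borel_measurable G" by measurable
qed

lemma (in sigma_finite_subalgebra) real_cond_exp_paste:
  assumes A: "A \<in> sets F" and f: "integrable M f" and g: "integrable M g"
  shows "AE x in M. real_cond_exp M F (\<lambda>y. indicator A y * f y + indicator (space M - A) y * g y) x
      = indicator A x * real_cond_exp M F f x + indicator (space M - A) x * real_cond_exp M F g x"
proof -
  have [measurable]: "A \<in> sets F" "space M - A \<in> sets F"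
    using A subalg sets.compl_sets[OF A] by (auto simp: subalgebra_def)
  then have AM: "A \<in> sets M" "space M - A \<in> sets M"
    using subalg by (auto simp: subalgebra_def)
  have fA: "integrable M (\<lambda>y. indicator A y * f y)"
    and gA: "integrable M (\<lambda>y. indicator (space M - A) y * g y)"
    using integrable_real_mult_indicator[OF AM(1) f] integrable_real_mult_indicator[OF AM(2) g]
    by (simp_all add: mult.commute)
  have "AE x in M. real_cond_exp M F (\<lambda>y. indicator A y * f y) x = indicator A x * real_cond_exp M F f x"
    by (rule real_cond_exp_mult) (use f fA in auto)
  moreover have "AE x in M. real_cond_exp M F (\<lambda>y. indicator (space M - A) y * g y) x
      = indicator (space M - A) x * real_cond_exp M F g x"
    by (rule real_cond_exp_mult) (use g gA in auto)
  ultimately show ?thesis using real_cond_exp_add[OF fA gA]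
    by eventually_elim simp
qed

lemma finite_measure_dens_meas:
  assumes "Z \<in> prob_densities P"
  shows "finite_measure (dens_meas P Z)"
proof -
  have Z: "integrable P Z" "AE x in P. 0 \<le> Z x" and [measurable]: "Z \<in> borel_measurable P"
    using assms not_integrable_integral_eq by (fastforce simp: prob_densities_def)+
  have "emeasure (dens_meas P Z) (space (dens_meas P Z)) = (\<integral>\<^sup>+x. ennreal (Z x) \<partial>P)"
    by (simp add: dens_meas_def emeasure_density)
  also have "\<dots> = ennreal (integral\<^sup>L P Z)"
    using Z by (rule nn_integral_eq_integral)
  finally show ?thesis by (intro finite_measureI) auto
qed

lemma sigma_finite_subalgebra_dens_meas:
  assumes "Z \<in> prob_densities P" and "subalgebra P G"
  shows "sigma_finite_subalgebra (dens_meas P Z) G"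
proof -
  interpret finite_measure "dens_meas P Z" using assms(1) by (rule finite_measure_dens_meas)
  have "finite_measure_subalgebra (dens_meas P Z) G"
    by unfold_locales (use assms(2) in \<open>auto simp: subalgebra_def dens_meas_def\<close>)
  then show ?thesis by (rule finite_measure_subalgebra_is_sigma_finite)
qed

lemma integrable_dens_meas:
  assumes "Z \<in> prob_densities P" and "Y \<in> borel_measurable P"
    and "integrable P (\<lambda>x. Z x * Y x)"
  shows "integrable (dens_meas P Z) Y"
  unfolding dens_meas_def
  using assms by (subst integrable_density) (auto simp: prob_densities_def)

lemma rv_lattice_measurable: "rv_lattice P N L \<Longrightarrow> Y \<in> L \<Longrightarrow> Y \<in> borel_measurable N"
  unfolding rv_lattice_def by (elim conjE) blast

lemma rv_lattice_paste:
  assumes L: "rv_lattice P N L" and "Y1 \<in> L" "Y2 \<in> L" "A \<in> sets N"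
  shows "(\<lambda>y. indicator A y * Y1 y + indicator (space N - A) y * Y2 y) \<in> L"
proof -
  have add: "\<forall>X\<in>L. \<forall>Y\<in>L. (\<lambda>x. X x + Y x) \<in> L"
    and ind: "\<forall>X\<in>L. \<forall>A\<in>sets N. (\<lambda>x. indicator A x * X x) \<in> L"
    using L unfolding rv_lattice_def by simp_all
  have "space N - A \<in> sets N" using assms(4) by auto
  then show ?thesis using add ind assms(2-4) by simp
qed

definition ae_downward_directed :: "'a measure \<Rightarrow> ('b \<Rightarrow> 'a \<Rightarrow> real) \<Rightarrow> 'b set \<Rightarrow> bool" where
  "ae_downward_directed M \<phi> D \<longleftrightarrow>
     (\<forall>d\<in>D. \<forall>e\<in>D. \<exists>c\<in>D. AE x in M. \<phi> c x = min (\<phi> d x) (\<phi> e x))"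

lemma admissible_downward_directed:
  assumes G: "subalgebra P G" and LF: "rv_lattice P P LF"
    and \<pi>G: "\<forall>Y\<in>LF. \<pi> Y \<in> borel_measurable G"
    and dual: "\<forall>Y\<in>LF. integrable P (\<lambda>x. Z x * Y x)"
    and REG: "\<forall>Y1\<in>LF. \<forall>Y2\<in>LF. \<forall>A\<in>sets G.
       AE x in P. \<pi> (\<lambda>y. indicator A y * Y1 y + indicator (space P - A) y * Y2 y) x
                 = indicator A x * \<pi> Y1 x + indicator (space P - A) x * \<pi> Y2 x"
    and Z: "Z \<in> prob_densities P"
  shows "ae_downward_directed P \<pi> {\<xi>. admissible P G LF X Z \<xi>}"
  unfolding ae_downward_directed_def
proof (intro ballI)
  let ?Q = "dens_meas P Z"
  interpret Q: sigma_finite_subalgebra ?Q G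
    using Z G by (rule sigma_finite_subalgebra_dens_meas)
  fix \<xi>1 \<xi>2 assume "\<xi>1 \<in> {\<xi>. admissible P G LF X Z \<xi>}" "\<xi>2 \<in> {\<xi>. admissible P G LF X Z \<xi>}"
  then have LF12: "\<xi>1 \<in> LF" "\<xi>2 \<in> LF"
    and ge12: "AE x in ?Q. real_cond_exp ?Q G \<xi>1 x \<ge> real_cond_exp ?Q G X x"
      "AE x in ?Q. real_cond_exp ?Q G \<xi>2 x \<ge> real_cond_exp ?Q G X x"
    by (simp_all add: admissible_def)
  have [measurable]: "\<pi> \<xi>1 \<in> borel_measurable G" "\<pi> \<xi>2 \<in> borel_measurable G"
    using \<pi>G LF12 by auto
  define A where "A = {x\<in>space G. \<pi> \<xi>1 x \<le> \<pi> \<xi>2 x}"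
  have AG: "A \<in> sets G" unfolding A_def by measurable
  have spaces: "space G = space P" "space ?Q = space P"
    using G by (simp_all add: subalgebra_def dens_meas_def)
  have AP: "A \<in> sets P"
    using AG G by (auto simp: subalgebra_def)
  define \<xi> where "\<xi> = (\<lambda>y. indicator A y * \<xi>1 y + indicator (space P - A) y * \<xi>2 y)"
  have "\<xi> \<in> LF"
    unfolding \<xi>_def by (rule rv_lattice_paste[OF LF LF12 AP])
  have int: "integrable ?Q Y" if "Y \<in> LF" for Y
    using integrable_dens_meas[OF Z] that dual rv_lattice_measurable[OF LF] by blast
  have "AE x in ?Q. real_cond_exp ?Q G \<xi> x
      = indicator A x * real_cond_exp ?Q G \<xi>1 x + indicator (space P - A) x * real_cond_exp ?Q G \<xi>2 x"
    unfolding \<xi>_def using Q.real_cond_exp_paste[OF AG int int, OF LF12] spaces by simp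
  with ge12 AE_space[of ?Q] have "AE x in ?Q. real_cond_exp ?Q G \<xi> x \<ge> real_cond_exp ?Q G X x"
    by eventually_elim (auto simp: indicator_def spaces)
  with \<open>\<xi> \<in> LF\<close> have "admissible P G LF X Z \<xi>"
    by (simp add: admissible_def)
  moreover have "AE x in P. \<pi> \<xi> x = indicator A x * \<pi> \<xi>1 x + indicator (space P - A) x * \<pi> \<xi>2 x"
    using REG LF12 AG unfolding \<xi>_def by blast
  then have "AE x in P. \<pi> \<xi> x = min (\<pi> \<xi>1 x) (\<pi> \<xi>2 x)"
    using AE_space[of P] by eventually_elim (auto simp: indicator_def A_def spaces)
  ultimately show "\<exists>\<xi>\<in>{\<xi>. admissible P G LF X Z \<xi>}. AE x in P. \<pi> \<xi> x = min (\<pi> \<xi>1 x) (\<pi> \<xi>2 x)"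
    by blast
qed

lemma ae_downward_directed_decseq_below:
  fixes g :: "nat \<Rightarrow> 'b"
  assumes dir: "ae_downward_directed M \<phi> D" and g: "\<And>n. g n \<in> D"
  shows "\<exists>d. (\<forall>n. d n \<in> D) \<and> (\<forall>n. AE x in M. \<phi> (d (Suc n)) x \<le> \<phi> (d n) x)
    \<and> (\<forall>n. AE x in M. \<phi> (d n) x \<le> \<phi> (g n) x)"
proof -
  obtain meet where meet: "\<And>a b. a \<in> D \<Longrightarrow> b \<in> D \<Longrightarrow>
      meet a b \<in> D \<and> (AE x in M. \<phi> (meet a b) x = min (\<phi> a x) (\<phi> b x))"
    using dir unfolding ae_downward_directed_def by metis
  define d where "d = rec_nat (g 0) (\<lambda>n e. meet e (g (Suc n)))"
  have d0: "d 0 = g 0" and dSuc: "d (Suc n) = meet (d n) (g (Suc n))" for n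
    by (simp_all add: d_def)
  have D: "d n \<in> D" for n
    by (induction n) (simp_all add: d0 dSuc g meet)
  have min: "AE x in M. \<phi> (d (Suc n)) x = min (\<phi> (d n) x) (\<phi> (g (Suc n)) x)" for n
    unfolding dSuc using meet[OF D g] by blast
  have "AE x in M. \<phi> (d (Suc n)) x \<le> \<phi> (d n) x" for n
    using min[of n] by eventually_elim simp
  moreover have "AE x in M. \<phi> (d n) x \<le> \<phi> (g n) x" for n
  proof (cases n)
    case (Suc k)
    show ?thesis using min[of k] unfolding Suc by eventually_elim simp
  qed (simp add: d0)
  ultimately show ?thesis using D by blast
qed

lemma ae_downward_directed_decseq_below_countable:
  assumes dir: "ae_downward_directed M \<phi> D" and "countable C" "C \<subseteq> D" "D \<noteq> {}"
  shows "\<exists>d. (\<forall>n. d n \<in> D) \<and> (\<forall>n. AE x in M. \<phi> (d (Suc n)) x \<le> \<phi> (d n) x)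
    \<and> (\<forall>c\<in>C. \<exists>n. AE x in M. \<phi> (d n) x \<le> \<phi> c x)"
proof -
  obtain d0 where "d0 \<in> D" using \<open>D \<noteq> {}\<close> by blast
  let ?C = "insert d0 C"
  have C_D: "from_nat_into ?C n \<in> D" for n
    using from_nat_into[of ?C n] \<open>d0 \<in> D\<close> \<open>C \<subseteq> D\<close> by auto
  from ae_downward_directed_decseq_below[where g = "from_nat_into ?C", OF dir C_D]
  obtain d where d: "\<forall>n. d n \<in> D" "\<forall>n. AE x in M. \<phi> (d (Suc n)) x \<le> \<phi> (d n) x"
    "\<forall>n. AE x in M. \<phi> (d n) x \<le> \<phi> (from_nat_into ?C n) x"
    by blast
  have "\<exists>n. AE x in M. \<phi> (d n) x \<le> \<phi> c x" if "c \<in> C" for c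
  proof
    have "from_nat_into ?C (to_nat_on ?C c) = c"
      using \<open>countable C\<close> that by (intro from_nat_into_to_nat_on) auto
    then show "AE x in M. \<phi> (d (to_nat_on ?C c)) x \<le> \<phi> c x"
      using d(3) by metis
  qed
  with d show ?thesis by blast
qed

lemma norm_arctan_le: "norm (arctan y) \<le> pi/2"
  using arctan_bounded[of y] by auto

lemma (in finite_measure) integrable_arctan:
  assumes [measurable]: "f \<in> borel_measurable M"
  shows "integrable M (\<lambda>x. arctan (f x))"
  by (rule integrable_const_bound[where B = "pi/2"]) (intro AE_I2 norm_arctan_le, measurable)

lemma (in finite_measure) integral_arctan_tendsto:
  assumes f: "\<And>n. f n \<in> borel_measurable M" and l: "l \<in> borel_measurable M"
    and lim: "AE x in M. (\<lambda>n. arctan (f n x)) \<longlonglongrightarrow> l x"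
  shows "integrable M l" and "(\<lambda>n. \<integral>x. arctan (f n x) \<partial>M) \<longlonglongrightarrow> integral\<^sup>L M l"
proof -
  have bound: "AE x in M. norm (arctan (f n x)) \<le> pi/2" for n
    by (intro AE_I2 norm_arctan_le)
  show "integrable M l"
    by (rule integrable_dominated_convergence[OF l _ _ lim bound]) (use f in auto)
  show "(\<lambda>n. \<integral>x. arctan (f n x) \<partial>M) \<longlonglongrightarrow> integral\<^sup>L M l"
    by (rule integral_dominated_convergence[OF l _ _ lim bound]) (use f in auto)
qed

lemma AE_le_of_integral_le_integral_min:
  fixes l u :: "'a \<Rightarrow> real"
  assumes l: "integrable M l" and lu: "integrable M (\<lambda>x. min (l x) (u x))"
    and le: "integral\<^sup>L M l \<le> (\<integral>x. min (l x) (u x) \<partial>M)"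
  shows "AE x in M. l x \<le> u x"
proof -
  have int: "integrable M (\<lambda>x. l x - min (l x) (u x))" using l lu by simp
  have "(\<integral>x. l x - min (l x) (u x) \<partial>M) \<le> 0" using l lu le by simp
  moreover have "(\<integral>x. l x - min (l x) (u x) \<partial>M) \<ge> 0" by (rule integral_nonneg_AE) simp
  ultimately have "AE x in M. l x - min (l x) (u x) = 0"
    using integral_nonneg_eq_0_iff_AE[OF int] by simp
  then show ?thesis by eventually_elim simp
qed

lemma INF_ereal_le_of_arctan_tendsto:
  assumes lim: "(\<lambda>n. arctan (f n)) \<longlonglongrightarrow> l" and "l \<le> arctan y"
  shows "(INF n. ereal (f n)) \<le> ereal y"
proof (rule ccontr)
  assume "\<not> ?thesis"
  then have "ereal y < (INF n. ereal (f n))" by simp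
  then obtain r where r: "ereal y < ereal r" "ereal r < (INF n. ereal (f n))"
    using ereal_dense2 by blast
  have "arctan r \<le> arctan (f n)" for n
  proof -
    have "ereal r < ereal (f n)" by (rule order.strict_trans2[OF r(2) INF_lower]) simp
    then show ?thesis by (simp add: arctan_le_iff)
  qed
  then have "arctan r \<le> l" by (intro LIMSEQ_le_const[OF lim]) auto
  with r(1) \<open>l \<le> arctan y\<close> arctan_less_iff[of y r] show False by simp
qed

text \<open>The family need not be bounded below, so its infimum is approached through the
  bounded, strictly increasing transform \<open>arctan\<close>.\<close>
lemma (in prob_space) ae_downward_directed_minimizing_decseq:
  assumes dir: "ae_downward_directed M \<phi> D" and "D \<noteq> {}"
    and meas: "\<And>d. d \<in> D \<Longrightarrow> \<phi> d \<in> borel_measurable M"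
  shows "\<exists>d. (\<forall>n. d n \<in> D) \<and> (\<forall>n. AE x in M. \<phi> (d (Suc n)) x \<le> \<phi> (d n) x) \<and>
    (\<forall>n. \<forall>e\<in>D. (\<integral>x. arctan (\<phi> (d n) x) \<partial>M) \<le> (\<integral>x. arctan (\<phi> e x) \<partial>M) + 1 / Suc n)"
proof -
  define c where "c e = (\<integral>x. arctan (\<phi> e x) \<partial>M)" for e
  have int: "integrable M (\<lambda>x. arctan (\<phi> e x))" if "e \<in> D" for e
    using meas[OF that] by (rule integrable_arctan)
  have "- (pi/2) \<le> c e" if "e \<in> D" for e
    unfolding c_def using int[OF that] arctan_lbound by (intro integral_ge_const AE_I2) (auto intro: less_imp_le)
  then have bdd: "bdd_below (c ` D)" by (intro bdd_belowI[of _ "- (pi/2)"]) auto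
  define s where "s = (INF e\<in>D. c e)"
  have "\<exists>e\<in>D. c e < s + 1 / Suc n" for n
    using cInf_lessD[of "c ` D" "s + 1 / Suc n"] \<open>D \<noteq> {}\<close> by (auto simp: s_def)
  then obtain \<zeta> where \<zeta>: "\<And>n. \<zeta> n \<in> D" "\<And>n. c (\<zeta> n) < s + 1 / Suc n"
    by metis
  obtain d where d: "\<forall>n. d n \<in> D" "\<forall>n. AE x in M. \<phi> (d (Suc n)) x \<le> \<phi> (d n) x"
    "\<forall>n. AE x in M. \<phi> (d n) x \<le> \<phi> (\<zeta> n) x"
    using ae_downward_directed_decseq_below[where g = \<zeta>, OF dir \<zeta>(1)] by blast
  have "c (d n) \<le> c e + 1 / Suc n" if "e \<in> D" for n e
  proof -
    have "c (d n) \<le> c (\<zeta> n)"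
      unfolding c_def using int[OF spec[OF d(1)]] int[OF \<zeta>(1)] d(3)
      by (intro integral_mono_AE) (auto simp: arctan_le_iff)
    also have "\<dots> < s + 1 / Suc n" by (fact \<zeta>(2))
    also have "s \<le> c e" unfolding s_def using bdd that by (rule cINF_lower)
    finally show ?thesis by simp
  qed
  with d(1,2) show ?thesis unfolding c_def by blast
qed

lemma (in prob_space) ae_downward_directed_countable_INF:
  assumes dir: "ae_downward_directed M \<phi> D" and "D \<noteq> {}"
    and meas: "\<And>d. d \<in> D \<Longrightarrow> \<phi> d \<in> borel_measurable M"
  shows "\<exists>d :: nat \<Rightarrow> 'b. (\<forall>n. d n \<in> D) \<and> (\<forall>e\<in>D. AE x in M. (INF n. ereal (\<phi> (d n) x)) \<le> ereal (\<phi> e x))"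
proof -
  have "\<exists>d. (\<forall>n. d n \<in> D) \<and> (\<forall>n. AE x in M. \<phi> (d (Suc n)) x \<le> \<phi> (d n) x) \<and>
    (\<forall>n. \<forall>e\<in>D. (\<integral>x. arctan (\<phi> (d n) x) \<partial>M) \<le> (\<integral>x. arctan (\<phi> e x) \<partial>M) + 1 / Suc n)"
    by (rule ae_downward_directed_minimizing_decseq[OF dir \<open>D \<noteq> {}\<close>]) (rule meas)
  then obtain d where D_all: "\<forall>n. d n \<in> D" and dec: "\<forall>n. AE x in M. \<phi> (d (Suc n)) x \<le> \<phi> (d n) x"
    and minimizing: "\<forall>n. \<forall>e\<in>D.
      (\<integral>x. arctan (\<phi> (d n) x) \<partial>M) \<le> (\<integral>x. arctan (\<phi> e x) \<partial>M) + 1 / Suc n"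
    by (elim exE conjE)
  have D: "d n \<in> D" for n using D_all by blast
  note [measurable] = meas[OF D]
  define l where "l x = lim (\<lambda>n. arctan (\<phi> (d n) x))" for x
  have l_meas[measurable]: "l \<in> borel_measurable M" unfolding l_def by measurable
  have "AE x in M. \<forall>n. \<phi> (d (Suc n)) x \<le> \<phi> (d n) x" using dec by (simp add: AE_all_countable)
  then have lim: "AE x in M. (\<lambda>n. arctan (\<phi> (d n) x)) \<longlonglongrightarrow> l x"
  proof eventually_elim
    case (elim x)
    have "decseq (\<lambda>n. arctan (\<phi> (d n) x))" using elim by (intro decseq_SucI) (simp add: arctan_le_iff)
    then obtain L where "(\<lambda>n. arctan (\<phi> (d n) x)) \<longlonglongrightarrow> L"
      by (rule decseq_convergent[where B = "- (pi/2)"]) (simp add: arctan_lbound less_imp_le)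
    then show ?case unfolding l_def by (simp add: limI)
  qed
  note l = integral_arctan_tendsto[OF meas[OF D] l_meas lim]
  have l_le: "integral\<^sup>L M l \<le> (\<integral>x. arctan (\<phi> e x) \<partial>M)" if "e \<in> D" for e
  proof (rule LIMSEQ_le[OF l(2)])
    show "(\<lambda>n. (\<integral>x. arctan (\<phi> e x) \<partial>M) + 1 / Suc n) \<longlonglongrightarrow> (\<integral>x. arctan (\<phi> e x) \<partial>M)"
      using tendsto_add[OF tendsto_const LIMSEQ_Suc[OF lim_const_over_n[of 1]]] by simp
  qed (use minimizing that in auto)
  have below: "AE x in M. (INF n. ereal (\<phi> (d n) x)) \<le> ereal (\<phi> e x)" if e: "e \<in> D" for e
  proof -
    have "\<forall>n. \<exists>t. t \<in> D \<and> (AE x in M. \<phi> t x = min (\<phi> (d n) x) (\<phi> e x))"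
      using dir D e unfolding ae_downward_directed_def by blast
    then obtain \<theta> where "\<forall>n. \<theta> n \<in> D \<and> (AE x in M. \<phi> (\<theta> n) x = min (\<phi> (d n) x) (\<phi> e x))"
      by (auto dest: choice)
    then have \<theta>: "\<And>n. \<theta> n \<in> D" "\<And>n. AE x in M. \<phi> (\<theta> n) x = min (\<phi> (d n) x) (\<phi> e x)"
      by simp_all
    note [measurable] = meas[OF \<theta>(1)] meas[OF e]
    have "AE x in M. \<forall>n. \<phi> (\<theta> n) x = min (\<phi> (d n) x) (\<phi> e x)"
      using \<theta>(2) by (simp add: AE_all_countable)
    with lim have lim_min: "AE x in M. (\<lambda>n. arctan (\<phi> (\<theta> n) x)) \<longlonglongrightarrow> min (l x) (arctan (\<phi> e x))"
    proof eventually_elim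
      case (elim x)
      have "(\<lambda>n. min (arctan (\<phi> (d n) x)) (arctan (\<phi> e x))) \<longlonglongrightarrow> min (l x) (arctan (\<phi> e x))"
        using elim(1) by (intro tendsto_min tendsto_const)
      moreover have "arctan (min u v) = min (arctan u) (arctan v)" for u v
        by (simp add: min_def arctan_le_iff)
      ultimately show ?case using elim(2) by simp
    qed
    have "(\<lambda>x. min (l x) (arctan (\<phi> e x))) \<in> borel_measurable M" by measurable
    note lmin = integral_arctan_tendsto[OF meas[OF \<theta>(1)] this lim_min]
    have "integral\<^sup>L M l \<le> (\<integral>x. min (l x) (arctan (\<phi> e x)) \<partial>M)"
      by (rule LIMSEQ_le_const[OF lmin(2)]) (use l_le \<theta>(1) in auto)
    from AE_le_of_integral_le_integral_min[OF l(1) lmin(1) this] lim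
    show ?thesis by eventually_elim (rule INF_ereal_le_of_arctan_tendsto)
  qed
  with D_all show ?thesis by blast
qed

lemma ereal_Inf_image_countable:
  fixes c :: "'b \<Rightarrow> ereal"
  assumes "D \<noteq> {}"
  shows "\<exists>d :: nat \<Rightarrow> 'b. (\<forall>n. d n \<in> D) \<and> (\<forall>e\<in>D. (INF n. c (d n)) \<le> c e)"
proof -
  have "c ` D \<noteq> {}" using assms by simp
  from Inf_countable_INF[OF this] obtain f :: "nat \<Rightarrow> ereal"
    where f: "range f \<subseteq> c ` D" "Inf (c ` D) = (INF n. f n)"
    by blast
  then have "\<forall>n. \<exists>e. e \<in> D \<and> f n = c e" by blast
  then have "\<exists>d. \<forall>n. d n \<in> D \<and> f n = c (d n)" by (rule choice)
  then obtain d where d: "\<forall>n. d n \<in> D \<and> f n = c (d n)" by blast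
  have "(INF n. c (d n)) \<le> c e" if "e \<in> D" for e
  proof -
    have "(INF n. c (d n)) = Inf (c ` D)" using d f(2) by simp
    also have "\<dots> \<le> c e" using that by (intro Inf_lower imageI)
    finally show ?thesis .
  qed
  with d show ?thesis by blast
qed

lemma AE_INF_le_INF:
  fixes f g :: "nat \<Rightarrow> 'a \<Rightarrow> real"
  assumes "\<And>n. \<exists>m. AE x in M. f m x \<le> g n x"
  shows "AE x in M. (INF m. ereal (f m x)) \<le> (INF n. ereal (g n x))"
proof -
  have "\<forall>n. \<exists>m. AE x in M. f m x \<le> g n x" using assms by blast
  then have "\<exists>k. \<forall>n. AE x in M. f (k n) x \<le> g n x" by (rule choice)
  then obtain k where "\<forall>n. AE x in M. f (k n) x \<le> g n x" by blast
  then have "AE x in M. \<forall>n. f (k n) x \<le> g n x" by (simp add: AE_all_countable)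
  then show ?thesis
  proof eventually_elim
    case (elim x)
    show ?case
    proof (rule INF_greatest)
      fix n
      have "(INF m. ereal (f m x)) \<le> ereal (f (k n) x)" by (rule INF_lower) simp
      also have "\<dots> \<le> ereal (g n x)" using elim by simp
      finally show "(INF m. ereal (f m x)) \<le> ereal (g n x)" .
    qed
  qed
qed

lemma INF_le_INF_of_AE_mono:
  fixes c :: "'b \<Rightarrow> 'c::complete_lattice"
  assumes mono: "\<And>d e. AE x in M. \<phi> d x \<le> \<phi> e x \<Longrightarrow> c d \<le> c e"
    and below: "\<And>n. \<exists>m. AE x in M. \<phi> (f m) x \<le> \<phi> (g n) x"
  shows "(INF m. c (f m)) \<le> (INF n. c (g n))"
proof (rule INF_greatest)
  fix n
  obtain m where "AE x in M. \<phi> (f m) x \<le> \<phi> (g n) x" using below by blast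
  then show "(INF m. c (f m)) \<le> c (g n)"
    by (intro INF_lower2[of m] mono) auto
qed

lemma (in prob_space) ae_downward_directed_decseq_approx:
  fixes \<C> :: "('b \<Rightarrow> ereal) set"
  assumes dir: "ae_downward_directed M \<phi> D" and ne: "D \<noteq> {}"
    and meas: "\<And>d. d \<in> D \<Longrightarrow> \<phi> d \<in> borel_measurable M"
    and "countable \<C>"
    and mono: "\<And>c d e. c \<in> \<C> \<Longrightarrow> AE x in M. \<phi> d x \<le> \<phi> e x \<Longrightarrow> c d \<le> c e"
  shows "\<exists>d :: nat \<Rightarrow> 'b. (\<forall>n. d n \<in> D) \<and> (\<forall>n. AE x in M. \<phi> (d (Suc n)) x \<le> \<phi> (d n) x) \<and>
    (\<forall>e\<in>D. AE x in M. (INF n. ereal (\<phi> (d n) x)) \<le> ereal (\<phi> e x)) \<and>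
    (\<forall>c\<in>\<C>. \<forall>e\<in>D. (INF n. c (d n)) \<le> c e)"
proof -
  have "\<exists>\<eta> :: nat \<Rightarrow> 'b. (\<forall>n. \<eta> n \<in> D) \<and>
      (\<forall>e\<in>D. AE x in M. (INF n. ereal (\<phi> (\<eta> n) x)) \<le> ereal (\<phi> e x))"
    by (rule ae_downward_directed_countable_INF[OF dir ne]) (rule meas)
  then obtain \<eta> :: "nat \<Rightarrow> 'b" where \<eta>: "\<forall>n. \<eta> n \<in> D"
    "\<forall>e\<in>D. AE x in M. (INF n. ereal (\<phi> (\<eta> n) x)) \<le> ereal (\<phi> e x)"
    by blast
  have "\<forall>c :: 'b \<Rightarrow> ereal. \<exists>d :: nat \<Rightarrow> 'b. (\<forall>n. d n \<in> D) \<and> (\<forall>e\<in>D. (INF n. c (d n)) \<le> c e)"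
    using ne by (intro allI ereal_Inf_image_countable)
  from choice[OF this] obtain F :: "('b \<Rightarrow> ereal) \<Rightarrow> nat \<Rightarrow> 'b"
    where F: "\<forall>c. (\<forall>n. F c n \<in> D) \<and> (\<forall>e\<in>D. (INF n. c (F c n)) \<le> c e)" ..
  define C where "C = range \<eta> \<union> (\<Union>c\<in>\<C>. range (F c))"
  have "countable C" "C \<subseteq> D"
    using \<open>countable \<C>\<close> \<eta>(1) F unfolding C_def by auto
  then have "\<exists>d. (\<forall>n. d n \<in> D) \<and> (\<forall>n. AE x in M. \<phi> (d (Suc n)) x \<le> \<phi> (d n) x) \<and>
      (\<forall>c\<in>C. \<exists>n. AE x in M. \<phi> (d n) x \<le> \<phi> c x)"
    by (intro ae_downward_directed_decseq_below_countable[OF dir _ _ ne])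
  then obtain d where d: "\<forall>n. d n \<in> D" "\<forall>n. AE x in M. \<phi> (d (Suc n)) x \<le> \<phi> (d n) x"
    "\<forall>c\<in>C. \<exists>n. AE x in M. \<phi> (d n) x \<le> \<phi> c x"
    by blast
  have "AE x in M. (INF n. ereal (\<phi> (d n) x)) \<le> ereal (\<phi> e x)" if "e \<in> D" for e
  proof -
    have "AE x in M. (INF m. ereal (\<phi> (d m) x)) \<le> (INF n. ereal (\<phi> (\<eta> n) x))"
      using d(3) unfolding C_def by (intro AE_INF_le_INF) blast
    moreover have "AE x in M. (INF n. ereal (\<phi> (\<eta> n) x)) \<le> ereal (\<phi> e x)"
      using \<eta>(2) that by blast
    ultimately show ?thesis by eventually_elim (rule order_trans)
  qed
  moreover have "(INF n. c (d n)) \<le> c e" if "c \<in> \<C>" "e \<in> D" for c e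
  proof -
    have "(INF m. c (d m)) \<le> (INF n. c (F c n))"
    proof (rule INF_le_INF_of_AE_mono[where c = c, OF mono[OF that(1)]])
      show "\<exists>m. AE x in M. \<phi> (d m) x \<le> \<phi> (F c n) x" for n
        using d(3) that(1) unfolding C_def by blast
    qed
    also have "\<dots> \<le> c e" using F that(2) by blast
    finally show ?thesis .
  qed
  ultimately show ?thesis using d(1,2) by blast
qed

lemma decseq_tendsto_Kfun:
  assumes \<pi>G: "\<forall>Y\<in>LF. \<pi> Y \<in> borel_measurable G"
    and adm: "\<And>m. admissible P G LF X Z (\<xi> m)"
    and dec: "\<And>m. AE x in P. \<pi> (\<xi> (Suc m)) x \<le> \<pi> (\<xi> m) x"
    and lower: "\<And>\<xi>'. admissible P G LF X Z \<xi>' \<Longrightarrow> AE x in P. (INF m. ereal (\<pi> (\<xi> m) x)) \<le> ereal (\<pi> \<xi>' x)"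
  shows "AE x in P. decseq (\<lambda>m. \<pi> (\<xi> m) x) \<and> (\<lambda>m. ereal (\<pi> (\<xi> m) x)) \<longlonglongrightarrow> Kfun P G LF \<pi> X Z x"
proof -
  have "AE x in P. (INF m. ereal (\<pi> (\<xi> m) x)) = Kfun P G LF \<pi> X Z x"
    unfolding Kfun_def
  proof (rule ess_inf_fam_eq_INF)
    show "(\<lambda>x. ereal (\<pi> (\<xi> m) x)) \<in> borel_measurable G" for m
      using \<pi>G adm[of m] by (auto simp: admissible_def)
  qed (use adm lower in auto)
  moreover have "AE x in P. \<forall>m. \<pi> (\<xi> (Suc m)) x \<le> \<pi> (\<xi> m) x"
    using dec by (simp add: AE_all_countable)
  ultimately show ?thesis
  proof eventually_elim
    case (elim x)
    then have "decseq (\<lambda>m. \<pi> (\<xi> m) x)" by (intro decseq_SucI) simp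
    with LIMSEQ_INF[of "\<lambda>m. ereal (\<pi> (\<xi> m) x)"] elim(1) show ?case
      by (simp add: decseq_def)
  qed
qed

lemma decseq_tendsto_Kpart:
  assumes G: "subalgebra P G" and \<Gamma>: "finite_G_partition G \<Gamma>"
    and adm: "\<And>m. admissible P G LF X Z (\<xi> m)"
    and dec: "\<And>m. AE x in P. \<pi> (\<xi> (Suc m)) x \<le> \<pi> (\<xi> m) x"
    and lower: "\<And>A \<xi>'. A \<in> \<Gamma> \<Longrightarrow> admissible P G LF X Z \<xi>' \<Longrightarrow>
      (INF m. pi_on P \<pi> A (\<xi> m)) \<le> pi_on P \<pi> A \<xi>'"
  shows "AE x in P. decseq (\<lambda>m. pi_part P \<pi> \<Gamma> (\<xi> m) x) \<and>
    (\<lambda>m. pi_part P \<pi> \<Gamma> (\<xi> m) x) \<longlonglongrightarrow> Kpart P G LF \<pi> \<Gamma> X Z x"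
proof -
  have block: "\<exists>A\<in>\<Gamma>. x \<in> A" if "x \<in> space P" for x
    using \<Gamma> G that by (auto simp: finite_G_partition_def subalgebra_def)
  have "(INF m. pi_part P \<pi> \<Gamma> (\<xi> m) x) \<le> pi_part P \<pi> \<Gamma> \<xi>' x"
    if "admissible P G LF X Z \<xi>'" "x \<in> space P" for \<xi>' x
    using block[OF that(2)] lower[OF _ that(1)] by (auto simp: pi_part_eq_pi_on[OF \<Gamma>])
  then have "AE x in P. (INF m. pi_part P \<pi> \<Gamma> (\<xi> m) x) = Kpart P G LF \<pi> \<Gamma> X Z x"
    unfolding Kpart_def
    by (intro ess_inf_fam_eq_INF) (auto intro: adm borel_measurable_pi_part[OF \<Gamma>])
  moreover have "decseq (\<lambda>m. pi_part P \<pi> \<Gamma> (\<xi> m) x)" if "x \<in> space P" for x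
    using block[OF that] dec by (auto intro!: decseq_SucI pi_on_mono simp: pi_part_eq_pi_on[OF \<Gamma>])
  then have "AE x in P. decseq (\<lambda>m. pi_part P \<pi> \<Gamma> (\<xi> m) x)" by (rule AE_I2)
  ultimately show ?thesis
  proof eventually_elim
    case (elim x)
    with LIMSEQ_INF[OF elim(2)] show ?case by simp
  qed
qed

theorem lemma31:
  fixes P G :: "'a measure"
    and LF LG Ls :: "('a \<Rightarrow> real) set"
    and \<pi> :: "('a \<Rightarrow> real) \<Rightarrow> ('a \<Rightarrow> real)"
    and \<Gamma> :: "nat \<Rightarrow> 'a set set"
    and X Z :: "'a \<Rightarrow> real"
  assumes P: "prob_space P"
    and G: "subalgebra P G"
    and LF: "rv_lattice P P LF"
    and LG: "rv_lattice P G LG"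
    and Ls_L1: "\<forall>Z'\<in>Ls. integrable P Z'"
    and Ls_dual: "\<forall>Z'\<in>Ls. \<forall>Y\<in>LF. integrable P (\<lambda>x. Z' x * Y x)"
    and Ls_lattice: "\<forall>Z1\<in>Ls. \<forall>Z2\<in>Ls. (\<lambda>x. Z1 x + Z2 x) \<in> Ls \<and> (\<lambda>x. max (Z1 x) (Z2 x)) \<in> Ls"
    and Ls_scal: "\<forall>Z'\<in>Ls. \<forall>c::real. (\<lambda>x. c * Z' x) \<in> Ls"
    and Ls_ind: "\<forall>Z'\<in>Ls. \<forall>A\<in>sets P. (\<lambda>x. indicator A x * Z' x) \<in> Ls"
    and pi_maps: "\<forall>Y\<in>LF. \<pi> Y \<in> LG"
    and pi_class: "\<forall>Y1\<in>LF. \<forall>Y2\<in>LF. (AE x in P. Y1 x = Y2 x) \<longrightarrow> (AE x in P. \<pi> Y1 x = \<pi> Y2 x)"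
    and REG: "\<forall>Y1\<in>LF. \<forall>Y2\<in>LF. \<forall>A\<in>sets G.
       AE x in P. \<pi> (\<lambda>y. indicator A y * Y1 y + indicator (space P - A) y * Y2 y) x
                 = indicator A x * \<pi> Y1 x + indicator (space P - A) x * \<pi> Y2 x"
    and parts: "\<forall>h. finite_G_partition G (\<Gamma> h)"
    and X: "X \<in> LF"
    and Z: "Z \<in> Ls \<inter> prob_densities P"
  shows "\<exists>\<xi> :: nat \<Rightarrow> ('a \<Rightarrow> real).
     (\<forall>m. \<xi> m \<in> LF) \<and>
     (\<forall>m. AE x in dens_meas P Z.
            real_cond_exp (dens_meas P Z) G (\<xi> m) x \<ge> real_cond_exp (dens_meas P Z) G X x) \<and>
     (AE x in P. decseq (\<lambda>m. \<pi> (\<xi> m) x) \<and>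
                 (\<lambda>m. ereal (\<pi> (\<xi> m) x)) \<longlonglongrightarrow> Kfun P G LF \<pi> X Z x) \<and>
     (\<forall>h. AE x in P. decseq (\<lambda>m. pi_part P \<pi> (\<Gamma> h) (\<xi> m) x) \<and>
                 (\<lambda>m. pi_part P \<pi> (\<Gamma> h) (\<xi> m) x) \<longlonglongrightarrow> Kpart P G LF \<pi> (\<Gamma> h) X Z x)"
proof -
  let ?A = "{\<xi>. admissible P G LF X Z \<xi>}"
  let ?\<C> = "(\<lambda>B. pi_on P \<pi> B) ` (\<Union>h. \<Gamma> h)"
  interpret prob_space P by (rule P)
  have \<pi>G: "\<forall>Y\<in>LF. \<pi> Y \<in> borel_measurable G"
    using pi_maps rv_lattice_measurable[OF LG] by blast
  have dual: "\<forall>Y\<in>LF. integrable P (\<lambda>x. Z x * Y x)" and density: "Z \<in> prob_densities P"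
    using Ls_dual Z by blast+
  have dir: "ae_downward_directed P \<pi> ?A"
    using G LF \<pi>G dual REG density by (rule admissible_downward_directed)
  have ne: "?A \<noteq> {}" using X by (auto simp: admissible_def)
  have meas: "\<pi> \<xi> \<in> borel_measurable P" if "\<xi> \<in> ?A" for \<xi>
    using \<pi>G that by (intro measurable_from_subalg[OF G]) (auto simp: admissible_def)
  have "countable ?\<C>"
    using parts by (auto simp: finite_G_partition_def intro: countable_finite)
  from ae_downward_directed_decseq_approx[OF dir ne meas this] pi_on_mono obtain \<xi>
    where \<xi>: "\<forall>m. \<xi> m \<in> ?A" "\<forall>m. AE x in P. \<pi> (\<xi> (Suc m)) x \<le> \<pi> (\<xi> m) x"
      "\<forall>\<xi>'\<in>?A. AE x in P. (INF m. ereal (\<pi> (\<xi> m) x)) \<le> ereal (\<pi> \<xi>' x)"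
      "\<forall>c\<in>?\<C>. \<forall>\<xi>'\<in>?A. (INF m. c (\<xi> m)) \<le> c \<xi>'"
    by blast
  have "AE x in P. decseq (\<lambda>m. \<pi> (\<xi> m) x) \<and> (\<lambda>m. ereal (\<pi> (\<xi> m) x)) \<longlonglongrightarrow> Kfun P G LF \<pi> X Z x"
    using \<xi> by (intro decseq_tendsto_Kfun[OF \<pi>G]) auto
  moreover have "AE x in P. decseq (\<lambda>m. pi_part P \<pi> (\<Gamma> h) (\<xi> m) x) \<and>
      (\<lambda>m. pi_part P \<pi> (\<Gamma> h) (\<xi> m) x) \<longlonglongrightarrow> Kpart P G LF \<pi> (\<Gamma> h) X Z x" for h
    using \<xi> by (intro decseq_tendsto_Kpart[OF G spec[OF parts]]) auto
  ultimately show ?thesis using \<xi>(1) by (auto simp: admissible_def)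
qed

end
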